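(* Let $\mathbf{A}=(A_1,\ldots,A_n)$ be a POVM on $\mathbb{C}^d$ that is $\mathcal{U}$-simulable, where $\mathcal{U}$ is the set of unbiased 2-outcome POVMs on $\mathbb{C}^d$. Then every antipodal operator $\bar A_i$ is positive semidefinite, $\bar{\mathbf{A}}=(\bar A_1,\ldots,\bar A_n)$ is a POVM, and the pair $\{\mathbf{A},\bar{\mathbf{A}}\}$ is jointly measurable.
   Context: A POVM on $\mathbb{C}^d$ with $n$ outcomes is a tuple $\mathbf{A}=(A_1,\ldots,A_n)$ of positive semidefinite operators with $\sum_a A_a=\mathbb{I}$ (some effects may be zero). Given a set $\mathcal{B}=\{\mathbf{B}^{(j)}\}_j$ of POVMs, a POVM $\mathbf{A}$ with $n$ outcomes is $\mathcal{B}$-simulable if there are a probability distribution $p(j)$ over (finitely many) elements of $\mathcal{B}$ and conditional probability distributions $q(i|j,i')$ (over $i\in\{1,\ldots,n\}$, for each $j$ and each outcome $i'$ of $\mathbf{B}^{(j)}$) such that $A_i=\sum_j p(j)\sum_{i'}q(i|j,i')B^{(j)}_{i'}$ for all $i$. Every Hermitian operator on $\mathbb{C}^d$ can be written uniquely as $A=a\mathbb{I}+\vec v\cdot\vec\lambda$ with $a\in\mathbb{R}$, $\vec v\in\mathbb{R}^{d^2-1}$, where $\vec\lambda=(\lambda_1,\ldots,\lambda_{d^2-1})$ is a fixed tuple of traceless Hermitian operators which together with $\mathbb{I}$ form a basis of the real space of Hermitian operators (e.g. Pauli matrices for $d=2$); here $a=\mathrm{Tr}(A)/d$. The antipodal operator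 of $A$ is $\bar A=a\mathbb{I}-\vec v\cdot\vec\lambda=\frac{2\mathrm{Tr}(A)}{d}\mathbb{I}-A$. A 2-outcome POVM is unbiased if it has the form $(\tfrac12\mathbb{I}+\vec v\cdot\vec\lambda,\ \tfrac12\mathbb{I}-\vec v\cdot\vec\lambda)$. A pair of POVMs $\mathbf{A}$ ($n_1$ outcomes), $\mathbf{A}'$ ($n_2$ outcomes) is jointly measurable if there is a POVM $(M_{ab})$ with $\sum_b M_{ab}=A_a$ and $\sum_a M_{ab}=A'_b$ for all $a,b$. *)

theory Defs
  imports "HOL-Analysis.Analysis"
begin

text \<open>Operators on C^d are represented as matrices of type complex^'d^'d with d = CARD('d).
  POVMs with n outcomes are functions from outcome indices to operators, the outcomes
  being indexed by 0..<n (values at indices >= n are irrelevant).\<close>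

type_synonym 'd op = "complex^'d^'d"

definition hermitian :: "'d::finite op \<Rightarrow> bool" where
  "hermitian A \<longleftrightarrow> (\<forall>i j. A$i$j = cnj (A$j$i))"

definition psd :: "'d::finite op \<Rightarrow> bool" where
  "psd A \<longleftrightarrow> hermitian A \<and>
     (\<forall>x::complex^'d. 0 \<le> Re (\<Sum>i\<in>UNIV. \<Sum>j\<in>UNIV. cnj (x$i) * A$i$j * x$j))"

definition povm :: "nat \<Rightarrow> (nat \<Rightarrow> 'd::finite op) \<Rightarrow> bool" where
  "povm n A \<longleftrightarrow> (\<forall>a<n. psd (A a)) \<and> (\<Sum>a<n. A a) = mat 1"

definition antipodal :: "'d::finite op \<Rightarrow> 'd op" where
  "antipodal A = mat (2 * trace A / of_nat CARD('d)) - A"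

text \<open>Unbiased 2-outcome POVM (1/2 I + v.lambda, 1/2 I - v.lambda): v.lambda ranges exactly
  over the traceless Hermitian operators.\<close>
definition unbiased :: "(nat \<Rightarrow> 'd::finite op) \<Rightarrow> bool" where
  "unbiased B \<longleftrightarrow> povm 2 B \<and>
     (\<exists>V. hermitian V \<and> trace V = 0 \<and> B 0 = mat (1/2) + V \<and> B 1 = mat (1/2) - V)"

definition unbiased_povms :: "(nat \<times> (nat \<Rightarrow> 'd::finite op)) set" where
  "unbiased_povms = {(2, B) | B. unbiased B}"

text \<open>B-simulability: finitely many elements B^(j) (j < m) of the set, a probability
  distribution p over them and conditional distributions q j i' i = q(i|j,i').\<close>
definition simulable :: "(nat \<times> (nat \<Rightarrow> 'd::finite op)) set \<Rightarrow> nat \<Rightarrow> (nat \<Rightarrow> 'd op) \<Rightarrow> bool" where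
  "simulable \<B> n A \<longleftrightarrow>
     (\<exists>(m::nat) (p::nat \<Rightarrow> real) (N::nat \<Rightarrow> nat) (B::nat \<Rightarrow> nat \<Rightarrow> 'd op)
        (q::nat \<Rightarrow> nat \<Rightarrow> nat \<Rightarrow> real).
        (\<forall>j<m. (N j, B j) \<in> \<B>) \<and>
        (\<forall>j<m. 0 \<le> p j) \<and> (\<Sum>j<m. p j) = 1 \<and>
        (\<forall>j<m. \<forall>i'<N j. (\<forall>i<n. 0 \<le> q j i' i) \<and> (\<Sum>i<n. q j i' i) = 1) \<and>
        (\<forall>i<n. A i = (\<Sum>j<m. p j *\<^sub>R (\<Sum>i'<N j. q j i' i *\<^sub>R B j i'))))"

definition jointly_measurable ::
  "nat \<Rightarrow> (nat \<Rightarrow> 'd::finite op) \<Rightarrow> nat \<Rightarrow> (nat \<Rightarrow> 'd op) \<Rightarrow> bool" where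
  "jointly_measurable n1 A n2 A' \<longleftrightarrow>
     (\<exists>M::nat \<Rightarrow> nat \<Rightarrow> 'd op.
        (\<forall>a<n1. \<forall>b<n2. psd (M a b)) \<and> (\<Sum>a<n1. \<Sum>b<n2. M a b) = mat 1 \<and>
        (\<forall>a<n1. (\<Sum>b<n2. M a b) = A a) \<and>
        (\<forall>b<n2. (\<Sum>a<n1. M a b) = A' b))"

end

theory Submission
  imports Defs
begin

text \<open>The antipodal map is linear and swaps the two effects of every unbiased POVM. Hence if
  \<open>A\<^sub>i = \<Sum>\<^sub>j p\<^sub>j (q\<^sub>j(i|0) B\<^sub>j\<^sub>0 + q\<^sub>j(i|1) B\<^sub>j\<^sub>1)\<close>, the antipodal operators arise from the same
  simulation with the two outcomes of each \<open>B\<^sub>j\<close> interchanged, and both POVMs are marginals of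
  \<open>M\<^sub>a\<^sub>b = \<Sum>\<^sub>j p\<^sub>j (q\<^sub>j(a|0) q\<^sub>j(b|1) B\<^sub>j\<^sub>0 + q\<^sub>j(a|1) q\<^sub>j(b|0) B\<^sub>j\<^sub>1)\<close>: the post-processing
  \<open>q\<^sub>j\<close> applied independently to the outcome of \<open>B\<^sub>j\<close> and to the flipped outcome.\<close>

lemma hermitian_add: "hermitian X \<Longrightarrow> hermitian Y \<Longrightarrow> hermitian (X + Y :: 'd::finite op)"
  unfolding hermitian_def by (metis complex_cnj_add vector_add_component)

lemma hermitian_scaleR: "hermitian X \<Longrightarrow> hermitian (c *\<^sub>R X :: 'd::finite op)"
  unfolding hermitian_def by (metis complex_cnj_scaleR vector_scaleR_component)

lemma psd_add:
  assumes "psd X" and "psd Y"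
  shows "psd (X + Y :: 'd::finite op)"
  using assms unfolding psd_def
  by (simp add: hermitian_add distrib_left distrib_right sum.distrib)

lemma psd_scaleR:
  assumes "psd X" and "0 \<le> c"
  shows "psd (c *\<^sub>R X :: 'd::finite op)"
  unfolding psd_def
proof (intro conjI allI)
  show "hermitian (c *\<^sub>R X)"
    using assms(1) unfolding psd_def by (simp add: hermitian_scaleR)
  fix x :: "complex^'d"
  have "cnj (x$i) * (c *\<^sub>R X)$i$j * x$j = of_real c * (cnj (x$i) * X$i$j * x$j)" for i j
    by (simp add: scaleR_conv_of_real[where 'a=complex])
  then have "(\<Sum>i\<in>UNIV. \<Sum>j\<in>UNIV. cnj (x$i) * (c *\<^sub>R X)$i$j * x$j)
      = of_real c * (\<Sum>i\<in>UNIV. \<Sum>j\<in>UNIV. cnj (x$i) * X$i$j * x$j)"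
    by (simp add: sum_distrib_left)
  moreover have "0 \<le> Re (\<Sum>i\<in>UNIV. \<Sum>j\<in>UNIV. cnj (x$i) * X$i$j * x$j)"
    using assms(1) unfolding psd_def by blast
  ultimately show "0 \<le> Re (\<Sum>i\<in>UNIV. \<Sum>j\<in>UNIV. cnj (x$i) * (c *\<^sub>R X)$i$j * x$j)"
    using assms(2) by simp
qed

lemma psd_sum: "(\<And>k. k \<in> S \<Longrightarrow> psd (f k)) \<Longrightarrow> psd (sum f S :: 'd::finite op)"
proof (induction S rule: infinite_finite_induct)
  case (insert x F)
  then show ?case by (simp add: psd_add)
qed (simp_all add: psd_def hermitian_def)

lemma mat_add: "mat (a + b) = (mat a + mat b :: 'a::monoid_add^'n^'n)"
  by (simp add: mat_def vec_eq_iff)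

lemma scaleR_mat: "c *\<^sub>R mat a = (mat (c *\<^sub>R a) :: 'a::real_vector^'n^'n)"
  by (simp add: mat_def vec_eq_iff)

lemma trace_scaleR: "trace (c *\<^sub>R A) = c *\<^sub>R trace (A :: 'a::real_algebra_1^'n^'n)"
  by (simp add: trace_def scaleR_sum_right)

lemma linear_antipodal: "linear (antipodal :: 'd::finite op \<Rightarrow> 'd op)"
proof (rule linearI)
  show "antipodal (X + Y) = antipodal X + antipodal Y" for X Y :: "'d op"
    by (simp add: antipodal_def trace_add add_divide_distrib distrib_left mat_add)
  show "antipodal (c *\<^sub>R X) = c *\<^sub>R antipodal X" for c and X :: "'d op"
    by (simp add: antipodal_def trace_scaleR scaleR_mat scaleR_diff_right
        scaleR_conv_of_real[where 'a=complex] mult.left_commute)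
qed

lemma antipodal_half_plus_traceless:
  assumes "trace V = 0"
  shows "antipodal (mat (1/2) + V) = (mat (1/2) - V :: 'd::finite op)"
proof -
  have "trace (mat (1/2) :: 'd op) = of_nat CARD('d) / 2"
    by (simp add: trace_def mat_def)
  then have "trace (mat (1/2) + V :: 'd op) = of_nat CARD('d) / 2"
    using assms by (simp add: trace_add)
  then have "2 * trace (mat (1/2) + V :: 'd op) / of_nat CARD('d) = 1"
    by (simp add: mult.commute)
  then show ?thesis
    by (simp add: antipodal_def mat_def vec_eq_iff)
qed

lemma antipodal_unbiased:
  assumes "unbiased B"
  shows "antipodal (B 0) = B 1" and "antipodal (B 1) = (B 0 :: 'd::finite op)"
proof -
  obtain V where V: "trace V = 0" and B: "B 0 = mat (1/2) + V" "B 1 = mat (1/2) + - V"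
    using assms unfolding unbiased_def by auto
  have "trace (- V) = 0"
    using V by (simp add: trace_def sum_negf)
  then show "antipodal (B 0) = B 1" and "antipodal (B 1) = B 0"
    using antipodal_half_plus_traceless[of V] antipodal_half_plus_traceless[of "- V"] V B
    by simp_all
qed

lemma antipodal_unbiased_mixture:
  assumes "\<And>j. j < m \<Longrightarrow> unbiased (B j)"
  shows "antipodal (\<Sum>j<m. x j *\<^sub>R B j 0 + y j *\<^sub>R B j 1)
       = (\<Sum>j<m. y j *\<^sub>R B j 0 + x j *\<^sub>R B j 1 :: 'd::finite op)"
proof -
  have "antipodal (x j *\<^sub>R B j 0 + y j *\<^sub>R B j 1) = y j *\<^sub>R B j 0 + x j *\<^sub>R B j 1"
    if "j < m" for j
  proof -
    have "antipodal (x j *\<^sub>R B j 0 + y j *\<^sub>R B j 1)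
        = x j *\<^sub>R antipodal (B j 0) + y j *\<^sub>R antipodal (B j 1)"
      by (simp only: linear_add[OF linear_antipodal] linear_scale[OF linear_antipodal])
    then show ?thesis
      by (simp only: antipodal_unbiased[OF assms[OF that]] add.commute)
  qed
  then have "(\<Sum>j<m. antipodal (x j *\<^sub>R B j 0 + y j *\<^sub>R B j 1))
      = (\<Sum>j<m. y j *\<^sub>R B j 0 + x j *\<^sub>R B j 1)"
    by (intro sum.cong) auto
  then show ?thesis
    by (simp only: linear_sum[OF linear_antipodal] o_def)
qed

definition unbiased_simulation ::
  "nat \<Rightarrow> (nat \<Rightarrow> nat \<Rightarrow> 'd::finite op) \<Rightarrow> (nat \<Rightarrow> real) \<Rightarrow> (nat \<Rightarrow> nat \<Rightarrow> nat \<Rightarrow> real)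
     \<Rightarrow> nat \<Rightarrow> (nat \<Rightarrow> 'd op) \<Rightarrow> bool" where
  "unbiased_simulation m B p q n A \<longleftrightarrow>
     (\<forall>j<m. unbiased (B j) \<and> 0 \<le> p j) \<and>
     (\<forall>j<m. \<forall>i<n. 0 \<le> q j 0 i \<and> 0 \<le> q j 1 i) \<and>
     (\<forall>j<m. (\<Sum>i<n. q j 0 i) = 1 \<and> (\<Sum>i<n. q j 1 i) = 1) \<and>
     (\<forall>i<n. A i = (\<Sum>j<m. (p j * q j 0 i) *\<^sub>R B j 0 + (p j * q j 1 i) *\<^sub>R B j 1))"

lemma simulable_unbiased_povms_imp_unbiased_simulation:
  assumes "simulable unbiased_povms n (A :: nat \<Rightarrow> 'd::finite op)"
  shows "\<exists>m B p q. unbiased_simulation m B p q n A"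
proof -
  obtain m :: nat and p :: "nat \<Rightarrow> real" and N :: "nat \<Rightarrow> nat" and B :: "nat \<Rightarrow> nat \<Rightarrow> 'd op"
    and q :: "nat \<Rightarrow> nat \<Rightarrow> nat \<Rightarrow> real" where
    B_unbiased: "\<forall>j<m. (N j, B j) \<in> unbiased_povms" and p_nonneg: "\<forall>j<m. 0 \<le> p j" and
    q_distribution: "\<forall>j<m. \<forall>i'<N j. (\<forall>i<n. 0 \<le> q j i' i) \<and> (\<Sum>i<n. q j i' i) = 1" and
    A_eq: "\<forall>i<n. A i = (\<Sum>j<m. p j *\<^sub>R (\<Sum>i'<N j. q j i' i *\<^sub>R B j i'))"
    using assms unfolding simulable_def by (elim exE conjE) (rule that; assumption)
  have "N j = 2" and "unbiased (B j)" if "j < m" for j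
    using B_unbiased that unfolding unbiased_povms_def by auto
  then have "unbiased_simulation m B p q n A"
    using p_nonneg q_distribution A_eq unfolding unbiased_simulation_def
    by (auto intro!: sum.cong simp: numeral_2_eq_2 scaleR_add_right)
  then show ?thesis
    by blast
qed

definition flip_joint ::
  "nat \<Rightarrow> (nat \<Rightarrow> real) \<Rightarrow> (nat \<Rightarrow> nat \<Rightarrow> nat \<Rightarrow> real) \<Rightarrow> (nat \<Rightarrow> nat \<Rightarrow> 'd::finite op)
     \<Rightarrow> nat \<Rightarrow> nat \<Rightarrow> 'd op" where
  "flip_joint m p q B a b =
     (\<Sum>j<m. (p j * q j 0 a * q j 1 b) *\<^sub>R B j 0 + (p j * q j 1 a * q j 0 b) *\<^sub>R B j 1)"

lemma psd_flip_joint: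
  assumes "\<And>j. j < m \<Longrightarrow> 0 \<le> p j \<and> psd (B j 0) \<and> psd (B j 1)"
    and "\<And>j. j < m \<Longrightarrow> 0 \<le> q j 0 a \<and> 0 \<le> q j 1 a \<and> 0 \<le> q j 0 b \<and> 0 \<le> q j 1 b"
  shows "psd (flip_joint m p q B a b)"
  unfolding flip_joint_def using assms
  by (intro psd_sum psd_add psd_scaleR) auto

lemma sum_flip_joint_right:
  assumes "\<And>j. j < m \<Longrightarrow> (\<Sum>b<n. q j 0 b) = 1 \<and> (\<Sum>b<n. q j 1 b) = 1"
  shows "(\<Sum>b<n. flip_joint m p q B a b)
       = (\<Sum>j<m. (p j * q j 0 a) *\<^sub>R B j 0 + (p j * q j 1 a) *\<^sub>R B j 1)"
proof -
  have "(\<Sum>b<n. flip_joint m p q B a b) = (\<Sum>j<m. \<Sum>b<n.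
      (p j * q j 0 a * q j 1 b) *\<^sub>R B j 0 + (p j * q j 1 a * q j 0 b) *\<^sub>R B j 1)"
    unfolding flip_joint_def by (rule sum.swap)
  also have "\<dots> = (\<Sum>j<m. (p j * q j 0 a) *\<^sub>R B j 0 + (p j * q j 1 a) *\<^sub>R B j 1)"
    using assms by (intro sum.cong) (simp_all add: sum.distrib flip: scaleR_sum_left sum_distrib_left)
  finally show ?thesis .
qed

lemma sum_flip_joint_left:
  assumes "\<And>j. j < m \<Longrightarrow> (\<Sum>a<n. q j 0 a) = 1 \<and> (\<Sum>a<n. q j 1 a) = 1"
  shows "(\<Sum>a<n. flip_joint m p q B a b)
       = (\<Sum>j<m. (p j * q j 1 b) *\<^sub>R B j 0 + (p j * q j 0 b) *\<^sub>R B j 1)"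
proof -
  have "(\<Sum>a<n. flip_joint m p q B a b) = (\<Sum>j<m. \<Sum>a<n.
      (p j * q j 0 a * q j 1 b) *\<^sub>R B j 0 + (p j * q j 1 a * q j 0 b) *\<^sub>R B j 1)"
    unfolding flip_joint_def by (rule sum.swap)
  also have "\<dots> = (\<Sum>j<m. (p j * q j 1 b) *\<^sub>R B j 0 + (p j * q j 0 b) *\<^sub>R B j 1)"
    using assms by (intro sum.cong)
      (simp_all add: sum.distrib flip: scaleR_sum_left sum_distrib_left sum_distrib_right)
  finally show ?thesis .
qed

lemma jointly_measurable_povm_right:
  assumes "jointly_measurable n1 A n2 A'"
  shows "povm n2 A'"
proof -
  obtain M where M_psd: "\<forall>a<n1. \<forall>b<n2. psd (M a b)"
    and M_total: "(\<Sum>a<n1. \<Sum>b<n2. M a b) = mat 1"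
    and M_col: "\<forall>b<n2. (\<Sum>a<n1. M a b) = A' b"
    using assms unfolding jointly_measurable_def by blast
  have "(\<Sum>b<n2. A' b) = (\<Sum>b<n2. \<Sum>a<n1. M a b)"
    using M_col by simp
  also have "\<dots> = mat 1"
    using M_total by (simp add: sum.swap[of _ "{..<n2}"])
  finally have "(\<Sum>b<n2. A' b) = mat 1" .
  moreover have "psd (A' b)" if "b < n2" for b
    using M_psd M_col that by (metis psd_sum lessThan_iff)
  ultimately show ?thesis
    unfolding povm_def by blast
qed

lemma unbiased_simulation_jointly_measurable_antipodal:
  assumes "unbiased_simulation m B p q n A" and A_total: "(\<Sum>i<n. A i) = mat 1"
  shows "jointly_measurable n A n (\<lambda>i. antipodal (A i))"
proof -
  have unb: "\<And>j. j < m \<Longrightarrow> unbiased (B j) \<and> 0 \<le> p j"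
    and q_nonneg: "\<And>j i. j < m \<Longrightarrow> i < n \<Longrightarrow> 0 \<le> q j 0 i \<and> 0 \<le> q j 1 i"
    and q_sum: "\<And>j. j < m \<Longrightarrow> (\<Sum>i<n. q j 0 i) = 1 \<and> (\<Sum>i<n. q j 1 i) = 1"
    and A: "\<And>i. i < n \<Longrightarrow> A i = (\<Sum>j<m. (p j * q j 0 i) *\<^sub>R B j 0 + (p j * q j 1 i) *\<^sub>R B j 1)"
    using assms(1) unfolding unbiased_simulation_def by blast+
  define M where "M = flip_joint m p q B"
  have M_psd: "psd (M a b)" if "a < n" "b < n" for a b
    unfolding M_def using unb q_nonneg that
    by (intro psd_flip_joint) (auto simp: unbiased_def povm_def)
  have M_row: "(\<Sum>b<n. M a b) = A a" if "a < n" for a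
    unfolding M_def using q_sum A that by (simp add: sum_flip_joint_right)
  have M_col: "(\<Sum>a<n. M a b) = antipodal (A b)" if "b < n" for b
  proof -
    have "(\<Sum>a<n. M a b) = (\<Sum>j<m. (p j * q j 1 b) *\<^sub>R B j 0 + (p j * q j 0 b) *\<^sub>R B j 1)"
      unfolding M_def using q_sum by (rule sum_flip_joint_left)
    also have "\<dots> = antipodal (A b)"
      unfolding A[OF that] using unb by (intro antipodal_unbiased_mixture[symmetric]) blast
    finally show ?thesis .
  qed
  have "(\<Sum>a<n. \<Sum>b<n. M a b) = mat 1"
    using M_row A_total by simp
  then show ?thesis
    unfolding jointly_measurable_def using M_psd M_row M_col by blast
qed

theorem proposition3:
  fixes A :: "nat \<Rightarrow> complex^'d^'d" and n :: nat
  assumes "povm n A"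
    and "simulable unbiased_povms n A"
  shows "(\<forall>i<n. psd (antipodal (A i))) \<and>
         povm n (\<lambda>i. antipodal (A i)) \<and>
         jointly_measurable n A n (\<lambda>i. antipodal (A i))"
proof -
  obtain m B p q where "unbiased_simulation m B p q n A"
    using simulable_unbiased_povms_imp_unbiased_simulation[OF assms(2)] by blast
  then have joint: "jointly_measurable n A n (\<lambda>i. antipodal (A i))"
    using assms(1) unfolding povm_def by (blast intro: unbiased_simulation_jointly_measurable_antipodal)
  then have "povm n (\<lambda>i. antipodal (A i))"
    by (rule jointly_measurable_povm_right)
  with joint show ?thesis
    unfolding povm_def by blast
qed

end
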